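(* Let $m\ge2$ be an integer and put $p(t)=t^{2^m}+1$ for $t\in\mathbb{R}$. Then there is a real polynomial $q$ of degree $2^{m-1}$ such that all $2^{m-1}+1$ coefficients of $q$ are positive and $p(t)=q(t)\,q(-t)$. *)

theory Defs
  imports "HOL-Computational_Algebra.Polynomial"
begin

end

theory Submission
  imports Defs
begin

text \<open>
  Since \<open>(t\<^sup>2 + b t + 1)(t\<^sup>2 - b t + 1) = t\<^sup>4 + (2 - b\<^sup>2) t\<^sup>2 + 1\<close>, a product \<open>q\<close> of
  palindromic quadratics \<open>t\<^sup>2 + a t + 1\<close> satisfies \<open>q(t) q(-t) = r(t\<^sup>2) r(-t\<^sup>2)\<close>, where \<open>r\<close>
  is the product of the quadratics with the coefficients \<open>a\<close> paired up via
  \<open>2 - b\<^sup>2 = a\<close>, \<open>2 - c\<^sup>2 = -a\<close>, i.e. \<open>b = \<surd>(2 - a)\<close>, \<open>c = \<surd>(2 + a)\<close>.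
  Starting from \<open>t\<^sup>4 + 1 = q(t) q(-t)\<close> with \<open>q = t\<^sup>2 + \<surd>2 t + 1\<close> and repeatedly replacing
  each coefficient \<open>a\<close> by the pair \<open>\<surd>(2 - a), \<surd>(2 + a)\<close> (these are the half-angle
  formulas for \<open>2 cos\<close>) squares the variable at every step. All coefficients stay in
  \<open>(0, 2)\<close>, so each factor, and hence their product, has positive coefficients.
\<close>

definition quad_prod :: "real list \<Rightarrow> real poly" where
  "quad_prod as = (\<Prod>a\<leftarrow>as. [:1, a, 1:])"

fun refine :: "real list \<Rightarrow> real list" where
  "refine [] = []"
| "refine (a # as) = sqrt (2 - a) # sqrt (2 + a) # refine as"

definition positive_coeffs :: "'a::linordered_idom poly \<Rightarrow> bool" where
  "positive_coeffs q \<longleftrightarrow> (\<forall>i \<le> degree q. 0 < coeff q i)"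

lemma quad_prod_simps [simp]:
  "quad_prod [] = 1"
  "quad_prod (a # as) = [:1, a, 1:] * quad_prod as"
  by (simp_all add: quad_prod_def)

lemma length_refine [simp]: "length (refine as) = 2 * length as"
  by (induction as) auto

lemma refine_in_interval:
  assumes "set as \<subseteq> {0<..<2}"
  shows "set (refine as) \<subseteq> {0<..<2}"
  using assms
proof (induction as)
  case (Cons a as)
  have "sqrt x < 2" if "x < 4" for x :: real
    using that real_sqrt_less_iff[of x 4] by simp
  with Cons show ?case by auto
qed simp

lemma length_refine_iter [simp]: "length ((refine ^^ n) as) = 2 ^ n * length as"
  by (induction n) auto

lemma refine_iter_in_interval:
  "set as \<subseteq> {0<..<2} \<Longrightarrow> set ((refine ^^ n) as) \<subseteq> {0<..<2}"
  by (induction n) (simp_all add: refine_in_interval)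

lemma poly_quad_times_reflect:
  fixes b t :: real
  shows "poly [:1, b, 1:] t * poly [:1, b, 1:] (- t) = poly [:1, 2 - b\<^sup>2, 1:] (t\<^sup>2)"
  by (simp add: algebra_simps power2_eq_square)

lemma poly_quad_prod_refine_times_reflect:
  assumes "set as \<subseteq> {-2..2}"
  shows "poly (quad_prod (refine as)) t * poly (quad_prod (refine as)) (- t)
       = poly (quad_prod as) (t\<^sup>2) * poly (quad_prod as) (- (t\<^sup>2))"
  using assms
proof (induction as)
  case (Cons a as)
  let ?r = "quad_prod (refine as)" and ?b = "sqrt (2 - a)" and ?c = "sqrt (2 + a)"
  have "poly (quad_prod (refine (a # as))) t * poly (quad_prod (refine (a # as))) (- t)
      = (poly [:1, ?b, 1:] t * poly [:1, ?b, 1:] (- t)) * (poly [:1, ?c, 1:] t * poly [:1, ?c, 1:] (- t))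
        * (poly ?r t * poly ?r (- t))"
    by (simp only: refine.simps quad_prod_simps poly_mult mult_ac)
  also have "\<dots> = poly [:1, a, 1:] (t\<^sup>2) * poly [:1, a, 1:] (- (t\<^sup>2))
        * (poly (quad_prod as) (t\<^sup>2) * poly (quad_prod as) (- (t\<^sup>2)))"
  proof -
    have "poly [:1, ?b, 1:] t * poly [:1, ?b, 1:] (- t) = poly [:1, a, 1:] (t\<^sup>2)"
      "poly [:1, ?c, 1:] t * poly [:1, ?c, 1:] (- t) = poly [:1, a, 1:] (- (t\<^sup>2))"
      using Cons.prems by (simp_all add: poly_quad_times_reflect algebra_simps power2_eq_square power4_eq_xxxx)
    with Cons show ?thesis
      by simp
  qed
  also have "\<dots> = poly (quad_prod (a # as)) (t\<^sup>2) * poly (quad_prod (a # as)) (- (t\<^sup>2))"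
    by (simp only: quad_prod_simps poly_mult mult_ac)
  finally show ?case .
qed simp

lemma poly_quad_prod_refine_iter:
  "poly (quad_prod ((refine ^^ n) [sqrt 2])) t * poly (quad_prod ((refine ^^ n) [sqrt 2])) (- t)
     = t ^ 2 ^ (n + 2) + 1"
proof (induction n arbitrary: t)
  case 0
  show ?case
    using poly_quad_times_reflect[of "sqrt 2" t] by (simp add: power2_eq_square power4_eq_xxxx)
next
  case (Suc n)
  have "set ((refine ^^ n) [sqrt 2]) \<subseteq> {-2..2}"
    using refine_iter_in_interval[of "[sqrt 2]" n] real_sqrt_less_iff[of 2 4] by force
  then show ?case
    using Suc.IH[of "t\<^sup>2"] by (simp add: poly_quad_prod_refine_times_reflect power_mult[symmetric])
qed

lemma degree_quad_prod [simp]: "degree (quad_prod as) = 2 * length as"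
proof (induction as)
  case (Cons a as)
  have "quad_prod as \<noteq> 0"
    by (auto simp: quad_prod_def prod_list_zero_iff)
  then show ?case
    using Cons by (simp add: degree_mult_eq del: mult_pCons_left)
qed simp

lemma positive_coeffs_nonzero: "positive_coeffs q \<Longrightarrow> q \<noteq> 0"
  by (auto simp: positive_coeffs_def)

lemma positive_coeffs_nonneg: "positive_coeffs q \<Longrightarrow> 0 \<le> coeff q i"
  by (cases "i \<le> degree q") (auto simp: positive_coeffs_def coeff_eq_0 less_imp_le)

lemma positive_coeffs_mult:
  assumes p: "positive_coeffs p" and q: "positive_coeffs q"
  shows "positive_coeffs (p * q)"
  unfolding positive_coeffs_def
proof (intro allI impI)
  fix i assume "i \<le> degree (p * q)"
  then have i: "i \<le> degree p + degree q"
    using p q by (simp add: degree_mult_eq positive_coeffs_nonzero)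
  \<comment> \<open>the summand with \<open>j = min i (degree p)\<close> is positive, all others are nonnegative\<close>
  have "0 < coeff p (min i (degree p)) * coeff q (i - min i (degree p))"
    using p q i by (simp add: positive_coeffs_def)
  then show "0 < coeff (p * q) i"
    unfolding coeff_mult
    by (intro sum_pos2[of _ "min i (degree p)"])
       (auto intro: mult_nonneg_nonneg positive_coeffs_nonneg p q)
qed

lemma positive_coeffs_quad_prod:
  "set as \<subseteq> {0<..} \<Longrightarrow> positive_coeffs (quad_prod as)"
proof (induction as)
  case (Cons a as)
  have "positive_coeffs [:1, a, 1:]"
    using Cons.prems by (auto simp: positive_coeffs_def less_Suc_eq_le le_Suc_eq)
  with Cons show ?case
    by (simp add: positive_coeffs_mult del: mult_pCons_left)
qed (simp add: positive_coeffs_def)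

theorem lemma9p1:
  fixes m :: nat
  assumes "m \<ge> 2"
  shows "\<exists>q :: real poly. degree q = 2 ^ (m - 1)
           \<and> (\<forall>i \<le> 2 ^ (m - 1). coeff q i > 0)
           \<and> (\<forall>t :: real. t ^ (2 ^ m) + 1 = poly q t * poly q (- t))"
proof -
  define n where "n = m - 2"
  define q where "q = quad_prod ((refine ^^ n) [sqrt 2])"
  have m: "m = n + 2"
    using assms by (simp add: n_def)
  have degree: "degree q = 2 ^ (m - 1)"
    by (simp add: q_def m)
  have "set ((refine ^^ n) [sqrt 2]) \<subseteq> {0<..<2}"
    using real_sqrt_less_iff[of 2 4] by (intro refine_iter_in_interval) simp
  then have "positive_coeffs q"
    unfolding q_def by (intro positive_coeffs_quad_prod) auto
  moreover have "t ^ (2 ^ m) + 1 = poly q t * poly q (- t)" for t :: real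
    by (simp add: q_def m poly_quad_prod_refine_iter)
  ultimately show ?thesis
    using degree by (auto simp: positive_coeffs_def)
qed

end
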